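(* Let $G$ be a complex, simply-connected, simple Lie group with Borel subgroup $B$, maximal torus $\mathbb{T}\subset B$, simple roots $\Delta$ and Weyl group $W$ with Bruhat order $\le$ and longest element $w_0$. For any parabolic subgroup $P\supseteq B$ (with corresponding $\Delta_P\subsetneq\Delta$ and $w_P$ the longest element of $W_P$) we have $\Gamma(w_0w_P)=\Delta$.
   Context: $W_P$ is the subgroup of $W$ generated by $s_\alpha$, $\alpha\in\Delta_P$. For $v\in W$, $\Gamma(v):=\{\alpha\in\Delta\mid s_\alpha\le v\}$, where $s_\alpha$ is the simple reflection associated with $\alpha$. *)

theory Defs
  imports "HOL-Analysis.Analysis"
begin

definition refl :: "'a::euclidean_space \<Rightarrow> 'a \<Rightarrow> 'a" where
  "refl \<alpha> x = x - (2 * (x \<bullet> \<alpha>) / (\<alpha> \<bullet> \<alpha>)) *\<^sub>R \<alpha>"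

definition root_system :: "'a::euclidean_space set \<Rightarrow> bool" where
  "root_system \<Phi> \<longleftrightarrow> finite \<Phi> \<and> 0 \<notin> \<Phi> \<and> span \<Phi> = UNIV \<and>
     (\<forall>\<alpha>\<in>\<Phi>. \<forall>\<beta>\<in>\<Phi>. refl \<alpha> \<beta> \<in> \<Phi> \<and> 2 * (\<beta> \<bullet> \<alpha>) / (\<alpha> \<bullet> \<alpha>) \<in> \<int>) \<and>
     (\<forall>\<alpha>\<in>\<Phi>. \<forall>c. c *\<^sub>R \<alpha> \<in> \<Phi> \<longrightarrow> c = 1 \<or> c = -1)"

definition irreducible_rs :: "'a::euclidean_space set \<Rightarrow> bool" where
  "irreducible_rs \<Phi> \<longleftrightarrow> \<not> (\<exists>A B. A \<noteq> {} \<and> B \<noteq> {} \<and> A \<union> B = \<Phi> \<and> A \<inter> B = {} \<and>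
       (\<forall>a\<in>A. \<forall>b\<in>B. a \<bullet> b = 0))"

definition is_base :: "'a::euclidean_space set \<Rightarrow> 'a set \<Rightarrow> bool" where
  "is_base \<Phi> \<Delta> \<longleftrightarrow> \<Delta> \<subseteq> \<Phi> \<and> independent \<Delta> \<and>
     (\<forall>\<beta>\<in>\<Phi>. \<exists>c::'a \<Rightarrow> nat.
        \<beta> = (\<Sum>\<alpha>\<in>\<Delta>. real (c \<alpha>) *\<^sub>R \<alpha>) \<or> \<beta> = - (\<Sum>\<alpha>\<in>\<Delta>. real (c \<alpha>) *\<^sub>R \<alpha>))"

definition wordprod :: "'a::euclidean_space list \<Rightarrow> 'a \<Rightarrow> 'a" where
  "wordprod ws = foldr (\<lambda>\<alpha> f. refl \<alpha> \<circ> f) ws id"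

text \<open>Group generated by the reflections in the set S (used for W and for W_P).\<close>
definition weyl :: "'a::euclidean_space set \<Rightarrow> ('a \<Rightarrow> 'a) set" where
  "weyl S = {wordprod ws | ws. set ws \<subseteq> S}"

definition len :: "'a::euclidean_space set \<Rightarrow> ('a \<Rightarrow> 'a) \<Rightarrow> nat" where
  "len \<Delta> w = (LEAST n. \<exists>ws. set ws \<subseteq> \<Delta> \<and> length ws = n \<and> wordprod ws = w)"

definition bruhat_step :: "'a::euclidean_space set \<Rightarrow> 'a set \<Rightarrow> ('a \<Rightarrow> 'a) \<Rightarrow> ('a \<Rightarrow> 'a) \<Rightarrow> bool" where
  "bruhat_step \<Phi> \<Delta> v w \<longleftrightarrow> (\<exists>\<beta>\<in>\<Phi>. w = v \<circ> refl \<beta>) \<and> len \<Delta> v < len \<Delta> w"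

definition bruhat_le :: "'a::euclidean_space set \<Rightarrow> 'a set \<Rightarrow> ('a \<Rightarrow> 'a) \<Rightarrow> ('a \<Rightarrow> 'a) \<Rightarrow> bool" where
  "bruhat_le \<Phi> \<Delta> v w \<longleftrightarrow> v \<in> weyl \<Delta> \<and> (bruhat_step \<Phi> \<Delta>)\<^sup>*\<^sup>* v w"

definition Gamma :: "'a::euclidean_space set \<Rightarrow> 'a set \<Rightarrow> ('a \<Rightarrow> 'a) \<Rightarrow> 'a set" where
  "Gamma \<Phi> \<Delta> v = {\<alpha>\<in>\<Delta>. bruhat_le \<Phi> \<Delta> (refl \<alpha>) v}"

end

theory Submission
  imports Defs
begin

(* The longest element w0 sends every positive root to a negative one, since a simple root d
   with w0 d positive would make w0 s_d longer than w0. An element of W_P leaves the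
   coordinates outside Delta_P unchanged. In an irreducible root system any two simple roots
   alpha and b occur with positive coefficients in a common positive root gamma; taking b
   outside Delta_P, the root wP gamma is still positive, so w0 wP gamma is negative and
   w0 wP changes the alpha-coordinate of gamma. Hence s_alpha occurs in every reduced word
   of w0 wP, and s_alpha <= w0 wP by the subword property. *)

lemma refl_linear: "linear (refl a)"
  by (rule linearI) (auto simp: refl_def inner_add_left algebra_simps add_divide_distrib
      scaleR_add_left[symmetric] simp del: scaleR_add_left)

lemma refl_inner:
  assumes "a \<noteq> 0" shows "refl a x \<bullet> refl a y = x \<bullet> y"
  using assms
  by (simp add: refl_def inner_diff_left inner_diff_right inner_commute field_simps power2_eq_square)

lemma refl_refl:
  assumes "a \<noteq> 0" shows "refl a (refl a x) = x"
  using assms by (simp add: refl_def inner_diff_left field_simps)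

lemma refl_self:
  assumes "a \<noteq> 0" shows "refl a a = - a"
  using assms by (simp add: refl_def algebra_simps scaleR_2)

lemma refl_inner_root:
  assumes "a \<noteq> 0" shows "refl a x \<bullet> a = - (x \<bullet> a)"
  using assms by (simp add: refl_def inner_diff_left field_simps)

lemma refl_conj:
  assumes "linear f" "\<And>x y. f x \<bullet> f y = x \<bullet> y"
  shows "f (refl d x) = refl (f d) (f x)"
  using assms by (simp add: refl_def linear_diff linear_scale)

lemma span_inner_eq_0:
  assumes "x \<in> span T" "y \<in> span U" "\<And>t u. t \<in> T \<Longrightarrow> u \<in> U \<Longrightarrow> t \<bullet> u = 0"
  shows "x \<bullet> y = 0"
proof -
  have "orthogonal u x" if "u \<in> U" for u
    using orthogonal_to_span[OF assms(1)] assms(3) that by (simp add: orthogonal_def inner_commute)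
  then have "orthogonal x y"
    using orthogonal_to_span[OF assms(2)] by (simp add: orthogonal_commute)
  then show ?thesis by (simp add: orthogonal_def)
qed

lemma wordprod_Nil [simp]: "wordprod [] = id"
  by (simp add: wordprod_def)

lemma wordprod_Cons [simp]: "wordprod (a # ws) = refl a \<circ> wordprod ws"
  by (simp add: wordprod_def)

lemma wordprod_append: "wordprod (xs @ ys) = wordprod xs \<circ> wordprod ys"
  by (induction xs) auto

lemma wordprod_linear: "linear (wordprod ws)"
  by (induction ws) (simp_all del: o_apply add: linear_ident linear_compose refl_linear)

lemma wordprod_inner: "0 \<notin> set ws \<Longrightarrow> wordprod ws x \<bullet> wordprod ws y = x \<bullet> y"
  by (induction ws) (auto simp: refl_inner)

lemma wordprod_rev_inverse: "0 \<notin> set ws \<Longrightarrow> wordprod ws (wordprod (rev ws) x) = x"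
  by (induction ws arbitrary: x) (auto simp: wordprod_append refl_refl)

lemma wordprod_refl_conj:
  assumes "0 \<notin> set ws"
  shows "refl b \<circ> wordprod ws = wordprod ws \<circ> refl (wordprod (rev ws) b)"
proof
  fix x
  have "wordprod ws (refl (wordprod (rev ws) b) x)
      = refl (wordprod ws (wordprod (rev ws) b)) (wordprod ws x)"
    by (rule refl_conj[OF wordprod_linear wordprod_inner[OF assms]])
  then show "(refl b \<circ> wordprod ws) x = (wordprod ws \<circ> refl (wordprod (rev ws) b)) x"
    using wordprod_rev_inverse[OF assms] by simp
qed

lemma refl_in_weyl: "a \<in> S \<Longrightarrow> refl a \<in> weyl S"
  unfolding weyl_def by (auto intro!: exI[of _ "[a]"])

lemma weyl_comp: "v \<in> weyl S \<Longrightarrow> w \<in> weyl S \<Longrightarrow> v \<circ> w \<in> weyl S"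
  unfolding weyl_def by clarify (metis le_sup_iff set_append wordprod_append)

lemma weyl_mono: "S \<subseteq> T \<Longrightarrow> weyl S \<subseteq> weyl T"
  unfolding weyl_def by auto

locale based_root_system =
  fixes \<Phi> \<Delta> :: "'a::euclidean_space set"
  assumes root_system: "root_system \<Phi>" and base: "is_base \<Phi> \<Delta>"
begin

lemma finite_roots: "finite \<Phi>"
  using root_system by (simp add: root_system_def)

lemma zero_not_root: "0 \<notin> \<Phi>"
  using root_system by (simp add: root_system_def)

lemma refl_root: "a \<in> \<Phi> \<Longrightarrow> b \<in> \<Phi> \<Longrightarrow> refl a b \<in> \<Phi>"
  using root_system by (simp add: root_system_def)

lemma root_multiple: "a \<in> \<Phi> \<Longrightarrow> c *\<^sub>R a \<in> \<Phi> \<Longrightarrow> c = 1 \<or> c = -1"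
  using root_system by (simp add: root_system_def)

lemma uminus_root: "a \<in> \<Phi> \<Longrightarrow> - a \<in> \<Phi>"
  by (metis refl_root refl_self zero_not_root)

lemma simple_roots_subset: "\<Delta> \<subseteq> \<Phi>"
  using base by (simp add: is_base_def)

lemma independent_simple_roots: "independent \<Delta>"
  using base by (simp add: is_base_def)

lemma finite_simple_roots: "finite \<Delta>"
  using simple_roots_subset finite_roots finite_subset by auto

lemma zero_not_simple_root: "0 \<notin> \<Delta>"
  using simple_roots_subset zero_not_root by auto

lemma root_nat_combination:
  assumes "\<gamma> \<in> \<Phi>"
  obtains c :: "'a \<Rightarrow> nat"
  where "\<gamma> = (\<Sum>\<alpha>\<in>\<Delta>. real (c \<alpha>) *\<^sub>R \<alpha>) \<or> \<gamma> = - (\<Sum>\<alpha>\<in>\<Delta>. real (c \<alpha>) *\<^sub>R \<alpha>)"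
  using base assms by (auto simp: is_base_def)

lemma in_span_simple_roots: "x \<in> span \<Delta>"
proof -
  have "\<gamma> \<in> span \<Delta>" if \<gamma>: "\<gamma> \<in> \<Phi>" for \<gamma>
  proof -
    obtain c :: "'a \<Rightarrow> nat"
      where "\<gamma> = (\<Sum>\<alpha>\<in>\<Delta>. real (c \<alpha>) *\<^sub>R \<alpha>) \<or> \<gamma> = - (\<Sum>\<alpha>\<in>\<Delta>. real (c \<alpha>) *\<^sub>R \<alpha>)"
      using root_nat_combination[OF \<gamma>] by blast
    moreover have "(\<Sum>\<alpha>\<in>\<Delta>. real (c \<alpha>) *\<^sub>R \<alpha>) \<in> span \<Delta>"
      by (intro span_sum span_scale span_base)
    ultimately show ?thesis using span_neg by metis
  qed
  then have "span \<Phi> \<subseteq> span \<Delta>" by (intro span_minimal) auto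
  moreover have "span \<Phi> = UNIV" using root_system by (simp add: root_system_def)
  ultimately show ?thesis by auto
qed

abbreviation coef :: "'a \<Rightarrow> 'a \<Rightarrow> real" where
  "coef d x \<equiv> representation \<Delta> x d"

lemma coef_diff: "coef b (x - y) = coef b x - coef b y"
  by (simp add: representation_diff[OF independent_simple_roots in_span_simple_roots in_span_simple_roots])

lemma coef_scale: "coef b (r *\<^sub>R x) = r * coef b x"
  by (simp add: representation_scale[OF independent_simple_roots in_span_simple_roots])

lemma coef_uminus: "coef b (- x) = - coef b x"
  by (simp add: representation_neg[OF independent_simple_roots in_span_simple_roots])

lemma coef_sum: "coef b (sum f I) = (\<Sum>i\<in>I. coef b (f i))"
  by (simp add: representation_sum[OF independent_simple_roots in_span_simple_roots])

lemma coef_simple_root: "d \<in> \<Delta> \<Longrightarrow> coef b d = (if b = d then 1 else 0)"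
  by (simp add: representation_basis[OF independent_simple_roots])

lemma sum_coef_scaleR: "(\<Sum>d\<in>\<Delta>. coef d x *\<^sub>R d) = x"
  by (rule sum_representation_eq[OF independent_simple_roots in_span_simple_roots
        finite_simple_roots order_refl])

lemma inner_coef_expansion: "x \<bullet> y = (\<Sum>d\<in>\<Delta>. coef d x * (d \<bullet> y))"
proof -
  have "(\<Sum>d\<in>\<Delta>. coef d x *\<^sub>R d) \<bullet> y = (\<Sum>d\<in>\<Delta>. coef d x * (d \<bullet> y))"
    by (simp add: inner_sum_left)
  then show ?thesis by (simp only: sum_coef_scaleR)
qed

lemma coef_sum_simple_roots:
  assumes "b \<in> \<Delta>" shows "coef b (\<Sum>d\<in>\<Delta>. c d *\<^sub>R d) = c b"
proof -
  have "coef b (\<Sum>d\<in>\<Delta>. c d *\<^sub>R d) = (\<Sum>d\<in>\<Delta>. if b = d then c d else 0)"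
    by (simp add: coef_sum coef_scale coef_simple_root if_distrib cong: if_cong)
  also have "\<dots> = c b" using assms finite_simple_roots by simp
  finally show ?thesis .
qed

lemma coef_refl: "coef b (refl d x) = coef b x - (2 * (x \<bullet> d) / (d \<bullet> d)) * coef b d"
  by (simp add: refl_def coef_diff coef_scale)

lemma coef_refl_other: "d \<in> \<Delta> \<Longrightarrow> b \<noteq> d \<Longrightarrow> coef b (refl d x) = coef b x"
  by (simp add: coef_refl coef_simple_root)

lemma coef_refl_same: "d \<in> \<Delta> \<Longrightarrow> coef d (refl d x) = coef d x - 2 * (x \<bullet> d) / (d \<bullet> d)"
  by (simp add: coef_refl coef_simple_root)

definition pos_root :: "'a \<Rightarrow> bool" where
  "pos_root \<gamma> \<longleftrightarrow> \<gamma> \<in> \<Phi> \<and> (\<forall>b\<in>\<Delta>. 0 \<le> coef b \<gamma>)"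

definition neg_root :: "'a \<Rightarrow> bool" where
  "neg_root \<gamma> \<longleftrightarrow> \<gamma> \<in> \<Phi> \<and> (\<forall>b\<in>\<Delta>. coef b \<gamma> \<le> 0)"

lemma pos_or_neg_root:
  assumes "\<gamma> \<in> \<Phi>" shows "pos_root \<gamma> \<or> neg_root \<gamma>"
proof -
  obtain c :: "'a \<Rightarrow> nat"
    where "\<gamma> = (\<Sum>\<alpha>\<in>\<Delta>. real (c \<alpha>) *\<^sub>R \<alpha>) \<or> \<gamma> = - (\<Sum>\<alpha>\<in>\<Delta>. real (c \<alpha>) *\<^sub>R \<alpha>)"
    using root_nat_combination[OF assms] by blast
  then show ?thesis
    using assms by (auto simp: pos_root_def neg_root_def coef_sum_simple_roots coef_uminus)
qed

lemma not_pos_and_neg_root: "pos_root \<gamma> \<Longrightarrow> neg_root \<gamma> \<Longrightarrow> False"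
proof -
  assume "pos_root \<gamma>" "neg_root \<gamma>"
  then have "\<forall>b\<in>\<Delta>. coef b \<gamma> = 0" "\<gamma> \<in> \<Phi>"
    unfolding pos_root_def neg_root_def by (auto intro: order.antisym)
  then have "\<gamma> = 0" "\<gamma> \<in> \<Phi>" using sum_coef_scaleR[of \<gamma>] by auto
  then show False using zero_not_root by auto
qed

lemma pos_rootI: "\<gamma> \<in> \<Phi> \<Longrightarrow> b \<in> \<Delta> \<Longrightarrow> 0 < coef b \<gamma> \<Longrightarrow> pos_root \<gamma>"
  using pos_or_neg_root[of \<gamma>] unfolding neg_root_def by force

lemma neg_root_uminus: "neg_root (- \<gamma>) \<longleftrightarrow> pos_root \<gamma>"
  unfolding pos_root_def neg_root_def using uminus_root[of "- \<gamma>"] uminus_root[of \<gamma>]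
  by (auto simp: coef_uminus)

lemma pos_root_simple: "a \<in> \<Delta> \<Longrightarrow> pos_root a"
  using simple_roots_subset by (auto simp: pos_root_def coef_simple_root)

lemma root_supported_on_simple_root:
  assumes "\<gamma> \<in> \<Phi>" "d \<in> \<Delta>" "\<forall>b\<in>\<Delta>. b \<noteq> d \<longrightarrow> coef b \<gamma> = 0"
  shows "\<gamma> = d \<or> \<gamma> = - d"
proof -
  have "\<gamma> = (\<Sum>b\<in>\<Delta>. coef b \<gamma> *\<^sub>R b)" by (simp only: sum_coef_scaleR)
  also have "\<dots> = (\<Sum>b\<in>\<Delta>. if b = d then coef d \<gamma> *\<^sub>R d else 0)"
    using assms(3) by (intro sum.cong) auto
  also have "\<dots> = coef d \<gamma> *\<^sub>R d" using assms(2) finite_simple_roots by simp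
  finally have \<gamma>: "\<gamma> = coef d \<gamma> *\<^sub>R d" .
  then have "coef d \<gamma> = 1 \<or> coef d \<gamma> = -1"
    using root_multiple[of d "coef d \<gamma>"] assms simple_roots_subset by auto
  then show ?thesis using \<gamma> by auto
qed

lemma pos_root_refl_simple:
  assumes d: "d \<in> \<Delta>" and pos: "pos_root \<gamma>" and "\<gamma> \<noteq> d"
  shows "pos_root (refl d \<gamma>)"
proof -
  have \<gamma>: "\<gamma> \<in> \<Phi>" using pos pos_root_def by auto
  have "\<gamma> \<noteq> - d"
  proof
    assume "\<gamma> = - d"
    then have "coef d \<gamma> = -1" using d by (simp add: coef_uminus coef_simple_root)
    then show False using pos d by (auto simp: pos_root_def)
  qed
  then obtain b where b: "b \<in> \<Delta>" "b \<noteq> d" "coef b \<gamma> \<noteq> 0"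
    using root_supported_on_simple_root[OF \<gamma> d] \<open>\<gamma> \<noteq> d\<close> by blast
  then have "0 < coef b (refl d \<gamma>)"
    using pos coef_refl_other[OF d b(2)] by (auto simp: pos_root_def less_le)
  moreover have "refl d \<gamma> \<in> \<Phi>" using refl_root d \<gamma> simple_roots_subset by auto
  ultimately show ?thesis using pos_rootI b by auto
qed

lemma simple_roots_inner_nonpos:
  assumes d: "d \<in> \<Delta>" and b: "b \<in> \<Delta>" and "d \<noteq> b"
  shows "d \<bullet> b \<le> 0"
proof (rule ccontr)
  assume "\<not> ?thesis"
  moreover have "0 < b \<bullet> b" using b zero_not_simple_root by auto
  ultimately have "0 < 2 * (d \<bullet> b) / (b \<bullet> b)" by simp
  moreover have "coef d (refl b d) = 1"
    using coef_refl_other[OF b \<open>d \<noteq> b\<close>] coef_simple_root[OF d] by simp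
  moreover have "coef b (refl b d) = - (2 * (d \<bullet> b) / (b \<bullet> b))"
    using coef_refl_same[OF b] coef_simple_root[OF d] \<open>d \<noteq> b\<close> by simp
  moreover have "refl b d \<in> \<Phi>" using refl_root d b simple_roots_subset by auto
  ultimately show False
    using pos_or_neg_root d b by (force simp: pos_root_def neg_root_def)
qed

lemma wordprod_root: "set ws \<subseteq> \<Phi> \<Longrightarrow> \<gamma> \<in> \<Phi> \<Longrightarrow> wordprod ws \<gamma> \<in> \<Phi>"
  by (induction ws) (auto intro: refl_root)

lemma weyl_root: "w \<in> weyl \<Delta> \<Longrightarrow> \<gamma> \<in> \<Phi> \<Longrightarrow> w \<gamma> \<in> \<Phi>"
  using wordprod_root simple_roots_subset by (auto simp: weyl_def)

lemma weyl_linear: "w \<in> weyl \<Delta> \<Longrightarrow> linear w"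
  using wordprod_linear by (auto simp: weyl_def)

lemma coef_wordprod_other: "set ws \<subseteq> \<Delta> \<Longrightarrow> b \<notin> set ws \<Longrightarrow> coef b (wordprod ws x) = coef b x"
  by (induction ws) (auto simp: coef_refl_other)

lemma coef_weyl_other:
  "S \<subseteq> \<Delta> \<Longrightarrow> w \<in> weyl S \<Longrightarrow> b \<notin> S \<Longrightarrow> coef b (w x) = coef b x"
  unfolding weyl_def by (auto intro!: coef_wordprod_other)

lemma linear_neg_on_simple_roots:
  assumes "linear w" "\<forall>d\<in>\<Delta>. neg_root (w d)" "pos_root \<gamma>" "w \<gamma> \<in> \<Phi>"
  shows "neg_root (w \<gamma>)"
proof -
  have "w \<gamma> = w (\<Sum>d\<in>\<Delta>. coef d \<gamma> *\<^sub>R d)" by (simp only: sum_coef_scaleR)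
  also have "\<dots> = (\<Sum>d\<in>\<Delta>. coef d \<gamma> *\<^sub>R w d)"
    using assms(1) by (simp add: linear_sum linear_scale o_def)
  finally have w\<gamma>: "w \<gamma> = (\<Sum>d\<in>\<Delta>. coef d \<gamma> *\<^sub>R w d)" .
  have "coef b (w \<gamma>) \<le> 0" if b: "b \<in> \<Delta>" for b
  proof -
    have "coef b (w \<gamma>) = (\<Sum>d\<in>\<Delta>. coef d \<gamma> * coef b (w d))"
      by (subst w\<gamma>) (simp add: coef_sum coef_scale)
    also have "\<dots> \<le> 0"
      using assms(2,3) b
      by (intro sum_nonpos mult_nonneg_nonpos) (auto simp: pos_root_def neg_root_def)
    finally show ?thesis .
  qed
  then show ?thesis using assms(4) by (simp add: neg_root_def)
qed

definition reduced_word :: "'a list \<Rightarrow> bool" where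
  "reduced_word ws \<longleftrightarrow> set ws \<subseteq> \<Delta> \<and> len \<Delta> (wordprod ws) = length ws"

lemma len_wordprod_le: "set ws \<subseteq> \<Delta> \<Longrightarrow> len \<Delta> (wordprod ws) \<le> length ws"
  unfolding len_def by (rule Least_le) auto

lemma obtain_reduced_word:
  assumes "w \<in> weyl \<Delta>"
  obtains ws where "reduced_word ws" "wordprod ws = w"
proof -
  have "\<exists>n ws. set ws \<subseteq> \<Delta> \<and> length ws = n \<and> wordprod ws = w"
    using assms by (auto simp: weyl_def)
  then have "\<exists>ws. set ws \<subseteq> \<Delta> \<and> length ws = len \<Delta> w \<and> wordprod ws = w"
    unfolding len_def by (rule LeastI_ex)
  then obtain ws where "set ws \<subseteq> \<Delta>" "length ws = len \<Delta> w" "wordprod ws = w" by blast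
  then show thesis using that[of ws] by (simp add: reduced_word_def)
qed

lemma len_comp_le:
  assumes "v \<in> weyl \<Delta>" "w \<in> weyl \<Delta>"
  shows "len \<Delta> (v \<circ> w) \<le> len \<Delta> v + len \<Delta> w"
proof -
  obtain vs ws where "reduced_word vs" "wordprod vs = v" "reduced_word ws" "wordprod ws = w"
    using obtain_reduced_word assms by metis
  then show ?thesis
    using len_wordprod_le[of "vs @ ws"] by (simp add: reduced_word_def wordprod_append)
qed

lemma reduced_word_appendD:
  assumes "reduced_word (xs @ ys)"
  shows "reduced_word xs" "reduced_word ys"
proof -
  have "set xs \<subseteq> \<Delta>" "set ys \<subseteq> \<Delta>" using assms by (auto simp: reduced_word_def)
  moreover have "length (xs @ ys) \<le> len \<Delta> (wordprod xs) + len \<Delta> (wordprod ys)"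
    using assms len_comp_le[of "wordprod xs" "wordprod ys"] \<open>set xs \<subseteq> \<Delta>\<close> \<open>set ys \<subseteq> \<Delta>\<close>
    by (auto simp: reduced_word_def weyl_def wordprod_append)
  ultimately show "reduced_word xs" "reduced_word ys"
    using len_wordprod_le[of xs] len_wordprod_le[of ys] by (auto simp: reduced_word_def)
qed

text \<open>The deletion step of the exchange condition.\<close>

lemma shorter_word_if_neg_root:
  assumes "set vs \<subseteq> \<Delta>" "a \<in> \<Delta>" "neg_root (wordprod vs a)"
  obtains us where "set us \<subseteq> \<Delta>" "length us < length vs" "wordprod us = wordprod vs \<circ> refl a"
  using assms
proof (induction vs arbitrary: thesis)
  case Nil
  then show ?case using pos_root_simple[of a] not_pos_and_neg_root by auto
next
  case (Cons b us)
  have b: "b \<in> \<Delta>" and us: "set us \<subseteq> \<Delta>" using Cons.prems by auto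
  show ?case
  proof (cases "neg_root (wordprod us a)")
    case True
    then obtain us' where "set us' \<subseteq> \<Delta>" "length us' < length us"
        "wordprod us' = wordprod us \<circ> refl a"
      using Cons.IH us Cons.prems(3) by blast
    then show ?thesis using b by (intro Cons.prems(1)[of "b # us'"]) auto
  next
    case False
    have us_roots: "set us \<subseteq> \<Phi>" using us simple_roots_subset by auto
    then have "wordprod us a \<in> \<Phi>" using wordprod_root Cons.prems(3) simple_roots_subset by auto
    then have pos: "pos_root (wordprod us a)" using False pos_or_neg_root by auto
    have "wordprod us a = b"
    proof (rule ccontr)
      assume "wordprod us a \<noteq> b"
      then have "pos_root (refl b (wordprod us a))" using pos_root_refl_simple[OF b pos] by auto
      moreover have "neg_root (refl b (wordprod us a))" using Cons.prems(4) by simp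
      ultimately show False using not_pos_and_neg_root by auto
    qed
    moreover have "0 \<notin> set us" using us_roots zero_not_root by auto
    ultimately have "wordprod us \<circ> refl a = refl b \<circ> wordprod us"
      using refl_conj[OF wordprod_linear wordprod_inner] by fastforce
    moreover have "b \<noteq> 0" using b zero_not_simple_root by auto
    ultimately have "wordprod us = wordprod (b # us) \<circ> refl a"
      using refl_refl[of b] by (simp add: fun_eq_iff)
    moreover have "length us < length (b # us)" by simp
    ultimately show ?thesis using us Cons.prems(1) by blast
  qed
qed

lemma len_less_comp_refl:
  assumes w: "w \<in> weyl \<Delta>" and a: "a \<in> \<Delta>" and pos: "pos_root (w a)"
  shows "len \<Delta> w < len \<Delta> (w \<circ> refl a)"
proof -
  have "w \<circ> refl a \<in> weyl \<Delta>" by (intro weyl_comp refl_in_weyl w a)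
  then obtain vs where vs: "reduced_word vs" "wordprod vs = w \<circ> refl a"
    by (rule obtain_reduced_word)
  have a0: "a \<noteq> 0" using a zero_not_simple_root by auto
  then have "wordprod vs a = - w a"
    using vs(2) refl_self[OF a0] linear_neg[OF weyl_linear[OF w]] by simp
  then have "neg_root (wordprod vs a)" using pos neg_root_uminus by simp
  then obtain us where us: "set us \<subseteq> \<Delta>" "length us < length vs"
      "wordprod us = wordprod vs \<circ> refl a"
    using shorter_word_if_neg_root vs(1) a by (auto simp: reduced_word_def)
  then have "wordprod us = w" using vs(2) refl_refl[OF a0] by (auto simp: fun_eq_iff)
  then have "len \<Delta> w \<le> length us" using len_wordprod_le[OF us(1)] by simp
  then show ?thesis using us(2) vs by (simp add: reduced_word_def)
qed

lemma longest_element_neg_root: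
  assumes w0: "w0 \<in> weyl \<Delta>" and longest: "\<forall>v\<in>weyl \<Delta>. len \<Delta> v \<le> len \<Delta> w0"
    and pos: "pos_root \<gamma>"
  shows "neg_root (w0 \<gamma>)"
proof (rule linear_neg_on_simple_roots[OF weyl_linear[OF w0] _ pos])
  show "w0 \<gamma> \<in> \<Phi>" using weyl_root[OF w0] pos by (auto simp: pos_root_def)
  show "\<forall>d\<in>\<Delta>. neg_root (w0 d)"
  proof
    fix d assume d: "d \<in> \<Delta>"
    have "\<not> pos_root (w0 d)"
    proof
      assume "pos_root (w0 d)"
      then have "len \<Delta> w0 < len \<Delta> (w0 \<circ> refl d)" by (rule len_less_comp_refl[OF w0 d])
      moreover have "w0 \<circ> refl d \<in> weyl \<Delta>" by (intro weyl_comp refl_in_weyl w0 d)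
      ultimately show False using longest by fastforce
    qed
    moreover have "w0 d \<in> \<Phi>" using weyl_root[OF w0] d simple_roots_subset by auto
    ultimately show "neg_root (w0 d)" using pos_or_neg_root by auto
  qed
qed

lemma bruhat_step_delete_letter:
  assumes "reduced_word (xs @ b # ys)"
  shows "bruhat_step \<Phi> \<Delta> (wordprod (xs @ ys)) (wordprod (xs @ b # ys))"
proof -
  have roots: "b \<in> \<Phi>" "set ys \<subseteq> \<Phi>"
    using assms simple_roots_subset by (auto simp: reduced_word_def)
  then have "0 \<notin> set ys" using zero_not_root by auto
  then have "wordprod (xs @ b # ys) = wordprod (xs @ ys) \<circ> refl (wordprod (rev ys) b)"
    using wordprod_refl_conj[of ys b] by (simp add: wordprod_append comp_assoc)
  moreover have "wordprod (rev ys) b \<in> \<Phi>" using wordprod_root roots by simp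
  moreover have "len \<Delta> (wordprod (xs @ ys)) < len \<Delta> (wordprod (xs @ b # ys))"
    using assms len_wordprod_le[of "xs @ ys"] by (auto simp: reduced_word_def)
  ultimately show ?thesis unfolding bruhat_step_def by blast
qed

lemma bruhat_chain_prefix:
  "reduced_word (xs @ ys) \<Longrightarrow> (bruhat_step \<Phi> \<Delta>)\<^sup>*\<^sup>* (wordprod xs) (wordprod (xs @ ys))"
proof (induction ys rule: rev_induct)
  case Nil
  then show ?case by simp
next
  case (snoc b ys)
  then have "reduced_word (xs @ ys)"
    using reduced_word_appendD(1)[of "xs @ ys" "[b]"] by simp
  moreover have "bruhat_step \<Phi> \<Delta> (wordprod (xs @ ys)) (wordprod (xs @ ys @ [b]))"
    using bruhat_step_delete_letter[of "xs @ ys" b "[]"] snoc.prems by simp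
  ultimately show ?case using snoc.IH by (simp add: rtranclp.rtrancl_into_rtrancl)
qed

lemma bruhat_chain_suffix:
  "reduced_word (xs @ ys) \<Longrightarrow> (bruhat_step \<Phi> \<Delta>)\<^sup>*\<^sup>* (wordprod ys) (wordprod (xs @ ys))"
proof (induction xs)
  case Nil
  then show ?case by simp
next
  case (Cons b xs)
  then have "reduced_word (xs @ ys)"
    using reduced_word_appendD(2)[of "[b]" "xs @ ys"] by simp
  moreover have "bruhat_step \<Phi> \<Delta> (wordprod (xs @ ys)) (wordprod (b # xs @ ys))"
    using bruhat_step_delete_letter[of "[]" b "xs @ ys"] Cons.prems by simp
  ultimately show ?case
    unfolding append_Cons using Cons.IH by (blast intro: rtranclp.rtrancl_into_rtrancl)
qed

lemma refl_bruhat_le_reduced_word: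
  assumes "reduced_word ws" "a \<in> set ws"
  shows "bruhat_le \<Phi> \<Delta> (refl a) (wordprod ws)"
proof -
  obtain xs ys where ws: "ws = xs @ a # ys" using split_list[OF assms(2)] by blast
  then have "reduced_word ([a] @ ys)" using reduced_word_appendD(2)[of xs "a # ys"] assms(1) by simp
  then have "(bruhat_step \<Phi> \<Delta>)\<^sup>*\<^sup>* (refl a) (wordprod (a # ys))"
    using bruhat_chain_prefix[of "[a]" ys] by simp
  moreover have "(bruhat_step \<Phi> \<Delta>)\<^sup>*\<^sup>* (wordprod (a # ys)) (wordprod ws)"
    using bruhat_chain_suffix[of xs "a # ys"] assms(1) ws by simp
  moreover have "refl a \<in> weyl \<Delta>" using assms ws refl_in_weyl by (auto simp: reduced_word_def)
  ultimately show ?thesis unfolding bruhat_le_def by simp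
qed

text \<open>Letters other than \<open>a\<close> fix \<open>a\<close>-coordinates, so \<open>a\<close> occurs in every reduced word of
  \<open>w\<close>; then apply the subword property.\<close>

lemma refl_bruhat_le_if_coef_changes:
  assumes "w \<in> weyl \<Delta>" "a \<in> \<Delta>" "coef a (w x) \<noteq> coef a x"
  shows "bruhat_le \<Phi> \<Delta> (refl a) w"
proof -
  obtain ws where ws: "reduced_word ws" "wordprod ws = w"
    using obtain_reduced_word[OF assms(1)] .
  then have "a \<in> set ws"
    using coef_wordprod_other assms(3) by (auto simp: reduced_word_def)
  then show ?thesis using refl_bruhat_le_reduced_word ws by blast
qed

definition height :: "'a \<Rightarrow> real" where
  "height x = (\<Sum>d\<in>\<Delta>. coef d x)"

lemma height_refl_simple:
  assumes "\<beta> \<in> \<Delta>"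
  shows "height (refl \<beta> x) = height x - 2 * (x \<bullet> \<beta>) / (\<beta> \<bullet> \<beta>)"
proof -
  have "height (refl \<beta> x) = height x - 2 * (x \<bullet> \<beta>) / (\<beta> \<bullet> \<beta>) * (\<Sum>d\<in>\<Delta>. coef d \<beta>)"
    by (simp add: height_def coef_refl sum_subtractf sum_distrib_left)
  also have "(\<Sum>d\<in>\<Delta>. coef d \<beta>) = 1"
    using assms finite_simple_roots by (simp add: coef_simple_root)
  finally show ?thesis by simp
qed

lemma pos_root_descent:
  assumes pos: "pos_root \<gamma>" and "\<gamma> \<notin> \<Delta>"
  obtains \<beta> where "\<beta> \<in> \<Delta>" "0 < \<gamma> \<bullet> \<beta>" "pos_root (refl \<beta> \<gamma>)"
proof -
  have "0 < \<gamma> \<bullet> \<gamma>" using pos zero_not_root by (auto simp: pos_root_def)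
  then have "0 < (\<Sum>d\<in>\<Delta>. coef d \<gamma> * (d \<bullet> \<gamma>))" using inner_coef_expansion[of \<gamma> \<gamma>] by simp
  then obtain \<beta> where \<beta>: "\<beta> \<in> \<Delta>" "0 < coef \<beta> \<gamma> * (\<beta> \<bullet> \<gamma>)"
    by (meson not_le sum_nonpos)
  moreover have "0 \<le> coef \<beta> \<gamma>" using pos \<beta>(1) by (auto simp: pos_root_def)
  ultimately have "0 < \<gamma> \<bullet> \<beta>" by (simp add: zero_less_mult_iff inner_commute)
  moreover have "pos_root (refl \<beta> \<gamma>)" using pos_root_refl_simple \<beta>(1) pos \<open>\<gamma> \<notin> \<Delta>\<close> by blast
  ultimately show thesis using that \<beta>(1) by blast
qed

lemma pos_root_induct [consumes 1, case_names simple reflect]: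
  assumes "pos_root \<gamma>"
    and simple: "\<And>\<delta>. \<delta> \<in> \<Delta> \<Longrightarrow> P \<delta>"
    and reflect: "\<And>\<delta> \<beta>. pos_root \<delta> \<Longrightarrow> \<beta> \<in> \<Delta> \<Longrightarrow> 0 < \<delta> \<bullet> \<beta> \<Longrightarrow> P (refl \<beta> \<delta>) \<Longrightarrow> P \<delta>"
  shows "P \<gamma>"
  using assms(1)
proof (induction "card {\<delta>\<in>\<Phi>. height \<delta> < height \<gamma>}" arbitrary: \<gamma> rule: less_induct)
  case less
  show ?case
  proof (cases "\<gamma> \<in> \<Delta>")
    case True
    then show ?thesis by (rule simple)
  next
    case False
    then obtain \<beta> where \<beta>: "\<beta> \<in> \<Delta>" "0 < \<gamma> \<bullet> \<beta>" "pos_root (refl \<beta> \<gamma>)"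
      using pos_root_descent less.prems by blast
    have "0 < \<beta> \<bullet> \<beta>" using \<beta>(1) zero_not_simple_root by auto
    then have "height (refl \<beta> \<gamma>) < height \<gamma>" using height_refl_simple[OF \<beta>(1)] \<beta>(2) by simp
    then have "{\<delta>\<in>\<Phi>. height \<delta> < height (refl \<beta> \<gamma>)} \<subset> {\<delta>\<in>\<Phi>. height \<delta> < height \<gamma>}"
      using \<beta>(3) by (auto simp: pos_root_def)
    then have "card {\<delta>\<in>\<Phi>. height \<delta> < height (refl \<beta> \<gamma>)} < card {\<delta>\<in>\<Phi>. height \<delta> < height \<gamma>}"
      using finite_roots by (intro psubset_card_mono) auto
    then show ?thesis using less.hyps \<beta> reflect less.prems by blast
  qed
qed

lemma pos_root_in_orthogonal_part:
  assumes "T \<union> U = \<Delta>" and orth: "\<And>t u. t \<in> T \<Longrightarrow> u \<in> U \<Longrightarrow> t \<bullet> u = 0"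
    and "pos_root \<gamma>"
  shows "\<gamma> \<in> span T \<or> \<gamma> \<in> span U"
  using assms(3)
proof (induction rule: pos_root_induct)
  case (simple \<delta>)
  then show ?case using assms(1) span_base by blast
next
  case (reflect \<delta> \<beta>)
  have \<beta>0: "\<beta> \<noteq> 0" using reflect.hyps(2) zero_not_simple_root by auto
  have "\<delta> \<in> span X"
    if "refl \<beta> \<delta> \<in> span X" "\<beta> \<in> X \<union> Y" "\<And>x y. x \<in> X \<Longrightarrow> y \<in> Y \<Longrightarrow> x \<bullet> y = 0" for X Y
  proof (cases "\<beta> \<in> X")
    case True
    have "\<delta> = refl \<beta> \<delta> + (2 * (\<delta> \<bullet> \<beta>) / (\<beta> \<bullet> \<beta>)) *\<^sub>R \<beta>" by (simp add: refl_def)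
    then show ?thesis using that(1) True by (metis span_add span_base span_scale)
  next
    case False
    then have "refl \<beta> \<delta> \<bullet> \<beta> = 0"
      using span_inner_eq_0[OF that(1) span_base that(3)] that(2) by blast
    then show ?thesis using refl_inner_root[OF \<beta>0] reflect.hyps(3) by simp
  qed
  moreover have "\<beta> \<in> T \<union> U" "\<beta> \<in> U \<union> T" using reflect.hyps(2) assms(1) by auto
  moreover have "\<And>u t. u \<in> U \<Longrightarrow> t \<in> T \<Longrightarrow> u \<bullet> t = 0" using orth by (metis inner_commute)
  ultimately show ?case using reflect.IH orth by blast
qed

lemma irreducible_simple_roots_orthogonal_split:
  assumes irr: "irreducible_rs \<Phi>" and "T \<subseteq> \<Delta>" "T \<noteq> {}"
    and orth: "\<And>t u. t \<in> T \<Longrightarrow> u \<in> \<Delta> - T \<Longrightarrow> t \<bullet> u = 0"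
  shows "T = \<Delta>"
proof (rule ccontr)
  assume "T \<noteq> \<Delta>"
  then obtain u where u: "u \<in> \<Delta> - T" using assms(2) by blast
  obtain t where t: "t \<in> T" using assms(3) by blast
  have spans_orth: "x \<bullet> y = 0" if "x \<in> span T" "y \<in> span (\<Delta> - T)" for x y
    using span_inner_eq_0[OF that orth] .
  define A where "A = \<Phi> \<inter> span T"
  define B where "B = \<Phi> - A"
  have B_span: "y \<in> span (\<Delta> - T)" if "y \<in> B" for y
  proof -
    have y: "y \<in> \<Phi>" "y \<notin> span T" "- y \<notin> span T"
      using that span_neg[of "- y" T] by (auto simp: A_def B_def)
    have parts: "\<Delta> = T \<union> (\<Delta> - T)" using assms(2) by blast
    note in_part = pos_root_in_orthogonal_part[OF parts[symmetric] orth]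
    consider "pos_root y" | "pos_root (- y)"
      using pos_or_neg_root[OF y(1)] neg_root_uminus[of "- y"] by auto
    then show ?thesis
    proof cases
      case 1
      then show ?thesis using in_part y(2) by blast
    next
      case 2
      then have "- y \<in> span (\<Delta> - T)" using in_part y(3) by blast
      then show ?thesis using span_neg by fastforce
    qed
  qed
  have "t \<in> A" using t assms(2) simple_roots_subset span_base by (auto simp: A_def)
  moreover have "u \<in> B"
  proof -
    have "u \<notin> span T" using spans_orth[of u u] span_base[of u] u zero_not_simple_root by auto
    then show ?thesis using u simple_roots_subset by (auto simp: A_def B_def)
  qed
  moreover have "\<forall>x\<in>A. \<forall>y\<in>B. x \<bullet> y = 0" using spans_orth B_span by (auto simp: A_def)
  moreover have "A \<union> B = \<Phi>" "A \<inter> B = {}" by (auto simp: A_def B_def)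
  ultimately show False using irr unfolding irreducible_rs_def by blast
qed

lemma pos_root_orthogonal_simple:
  assumes pos: "pos_root \<gamma>" and u: "u \<in> \<Delta>" and "coef u \<gamma> = 0" and "0 \<le> \<gamma> \<bullet> u"
    and d: "d \<in> \<Delta>" "coef d \<gamma> \<noteq> 0"
  shows "d \<bullet> u = 0"
proof -
  have terms: "0 \<le> - (coef e \<gamma> * (e \<bullet> u))" if e: "e \<in> \<Delta>" for e
  proof (cases "e = u")
    case True
    then show ?thesis using assms(3) by simp
  next
    case False
    then have "e \<bullet> u \<le> 0" using simple_roots_inner_nonpos[OF e u] by simp
    moreover have "0 \<le> coef e \<gamma>" using pos e by (auto simp: pos_root_def)
    ultimately show ?thesis by (simp add: mult_nonneg_nonpos)
  qed
  have "(\<Sum>e\<in>\<Delta>. - (coef e \<gamma> * (e \<bullet> u))) = - (\<gamma> \<bullet> u)"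
    using inner_coef_expansion[of \<gamma> u] by (simp add: sum_negf)
  moreover have "0 \<le> (\<Sum>e\<in>\<Delta>. - (coef e \<gamma> * (e \<bullet> u)))" using terms by (intro sum_nonneg) auto
  ultimately have "(\<Sum>e\<in>\<Delta>. - (coef e \<gamma> * (e \<bullet> u))) = 0" using assms(4) by linarith
  then have "\<forall>e\<in>\<Delta>. - (coef e \<gamma> * (e \<bullet> u)) = 0"
    using sum_nonneg_eq_0_iff[OF finite_simple_roots, of "\<lambda>e. - (coef e \<gamma> * (e \<bullet> u))"] terms
    by blast
  then have "coef d \<gamma> * (d \<bullet> u) = 0" using d(1) by simp
  then show ?thesis using d(2) by simp
qed

lemma pos_root_with_positive_coefs:
  assumes irr: "irreducible_rs \<Phi>" and a: "a \<in> \<Delta>" and b: "b \<in> \<Delta>"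
  obtains \<gamma> where "pos_root \<gamma>" "0 < coef a \<gamma>" "0 < coef b \<gamma>"
proof -
  define T where "T = {d\<in>\<Delta>. \<exists>\<gamma>. pos_root \<gamma> \<and> 0 < coef a \<gamma> \<and> coef d \<gamma> \<noteq> 0}"
  have "a \<in> T" using a pos_root_simple[OF a] coef_simple_root[OF a] by (auto simp: T_def)
  have orth: "t \<bullet> u = 0" if t: "t \<in> T" and u: "u \<in> \<Delta> - T" for t u
  proof -
    obtain \<gamma> where \<gamma>: "pos_root \<gamma>" "0 < coef a \<gamma>" "coef t \<gamma> \<noteq> 0" and "t \<in> \<Delta>"
      using t by (auto simp: T_def)
    have "coef u \<gamma> = 0" using u \<gamma> by (auto simp: T_def)
    moreover have "0 \<le> \<gamma> \<bullet> u"
    proof (rule ccontr)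
      assume "\<not> 0 \<le> \<gamma> \<bullet> u"
      moreover have "0 < u \<bullet> u" using u zero_not_simple_root by auto
      ultimately have "0 < coef u (refl u \<gamma>)"
        using coef_refl_same[of u \<gamma>] u \<open>coef u \<gamma> = 0\<close> by (simp add: divide_neg_pos)
      moreover have "refl u \<gamma> \<in> \<Phi>"
        using refl_root u \<gamma>(1) simple_roots_subset by (auto simp: pos_root_def)
      moreover have "coef a (refl u \<gamma>) = coef a \<gamma>"
        using coef_refl_other u \<open>a \<in> T\<close> by (metis DiffD1 DiffD2)
      ultimately have "u \<in> T" using pos_rootI[of "refl u \<gamma>" u] \<gamma>(2) u by (auto simp: T_def)
      then show False using u by simp
    qed
    ultimately show ?thesis using pos_root_orthogonal_simple \<gamma> \<open>t \<in> \<Delta>\<close> u by blast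
  qed
  have "T = \<Delta>"
  proof (rule irreducible_simple_roots_orthogonal_split[OF irr _ _ orth])
    show "T \<subseteq> \<Delta>" "T \<noteq> {}" using \<open>a \<in> T\<close> by (auto simp: T_def)
  qed
  then obtain \<gamma> where "pos_root \<gamma>" "0 < coef a \<gamma>" "coef b \<gamma> \<noteq> 0" using b T_def by auto
  then show thesis using that b by (auto simp: pos_root_def less_le)
qed

end

theorem lemma3p7:
  fixes \<Phi> \<Delta> \<Delta>P :: "'a::euclidean_space set" and w0 wP :: "'a \<Rightarrow> 'a"
  assumes "root_system \<Phi>" and "irreducible_rs \<Phi>" and "is_base \<Phi> \<Delta>"
    and "\<Delta>P \<subset> \<Delta>"
    and "w0 \<in> weyl \<Delta>" and "\<forall>v\<in>weyl \<Delta>. len \<Delta> v \<le> len \<Delta> w0"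
    and "wP \<in> weyl \<Delta>P" and "\<forall>v\<in>weyl \<Delta>P. len \<Delta> v \<le> len \<Delta> wP"
  shows "Gamma \<Phi> \<Delta> (w0 \<circ> wP) = \<Delta>"
proof -
  interpret based_root_system \<Phi> \<Delta> using assms(1,3) by unfold_locales
  obtain b where b: "b \<in> \<Delta>" "b \<notin> \<Delta>P" using assms(4) by blast
  have wP: "wP \<in> weyl \<Delta>" using assms(4,7) weyl_mono by blast
  have "bruhat_le \<Phi> \<Delta> (refl \<alpha>) (w0 \<circ> wP)" if \<alpha>: "\<alpha> \<in> \<Delta>" for \<alpha>
  proof -
    obtain \<gamma> where \<gamma>: "pos_root \<gamma>" "0 < coef \<alpha> \<gamma>" "0 < coef b \<gamma>"
      using pos_root_with_positive_coefs[OF assms(2) \<alpha> b(1)] .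
    have "coef b (wP \<gamma>) = coef b \<gamma>" using coef_weyl_other assms(4,7) b(2) by blast
    then have "pos_root (wP \<gamma>)"
      using pos_rootI weyl_root[OF wP] \<gamma> b(1) by (auto simp: pos_root_def)
    then have "neg_root (w0 (wP \<gamma>))" using longest_element_neg_root assms(5,6) by blast
    then have "coef \<alpha> ((w0 \<circ> wP) \<gamma>) \<noteq> coef \<alpha> \<gamma>" using \<alpha> \<gamma>(2) by (auto simp: neg_root_def)
    then show ?thesis using refl_bruhat_le_if_coef_changes weyl_comp assms(5) wP \<alpha> by blast
  qed
  then show ?thesis by (auto simp: Gamma_def)
qed

end
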